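(* Fix an episode $k\ge1$ of algorithm IHMDP-VCG and condition on $\mathcal F^{[k-1]}$, the $\sigma$-algebra of all events up to the end of episode $k-1$. Let $\nu^{[k]}$ be the stationary distribution of the Markov chain on $\mathcal S$ with transition matrix $P^{\pi^{[k]}}(s'|s)=\sum_a P(s'|s,a)\pi^{[k]}(a|s)$, and $\rho^{[k]}(s,a)=\nu^{[k]}(s)\pi^{[k]}(a|s)$. For a round $t$ of episode $k$, let $\mathbb E[\nu^t](s)=\Pr(s^t=s\mid\mathcal F^{[k-1]})$ and $\mathbb E[\rho^t](s,a)=\mathbb E[\nu^t](s)\pi^{[k]}(a|s)$. Then for every round $t$ in the stationary phase of episode $k$, $\|\mathbb E[\rho^t]-\rho^{[k]}\|_1=\|\mathbb E[\nu^t]-\nu^{[k]}\|_1\le 2/\sqrt k$.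
   Context: $\mathcal S,\mathcal A$ finite, $S=|\mathcal S|$, $P$ a transition kernel with $P(s'|s,a)\ge\alpha>0$ for all $s,s',a$; states evolve by $s^{t+1}\sim P(\cdot|s^t,a^t)$. In algorithm IHMDP-VCG, time is divided into episodes $k=1,2,\dots$; episode $k$ starts at round $\tau^{[k]}$ and consists of a mixing phase of $d^{[k]}=\frac{\log k}{\alpha S}$ rounds (rounds $\tau^{[k]},\dots,\tau^{[k]}+d^{[k]}-1$) followed by a stationary phase (subsequent rounds of the episode). A stationary policy $\pi^{[k]}$, determined by the history up to the end of episode $k-1$, is used to draw $a^t\sim\pi^{[k]}(\cdot|s^t)$ in every round $t$ of episode $k$ (both phases). *)

theory Defs
  imports "HOL-Probability.Probability"
begin

definition policy_kernel :: "('s \<Rightarrow> 'a \<Rightarrow> 's pmf) \<Rightarrow> ('s \<Rightarrow> 'a pmf) \<Rightarrow> 's \<Rightarrow> 's pmf" where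
  "policy_kernel P pol s = bind_pmf (pol s) (\<lambda>a. P s a)"

definition dist_step :: "('s \<Rightarrow> 'a \<Rightarrow> 's pmf) \<Rightarrow> ('s \<Rightarrow> 'a pmf) \<Rightarrow> 's pmf \<Rightarrow> 's pmf" where
  "dist_step P pol mu = bind_pmf mu (policy_kernel P pol)"

definition stationary_dist :: "('s \<Rightarrow> 'a \<Rightarrow> 's pmf) \<Rightarrow> ('s \<Rightarrow> 'a pmf) \<Rightarrow> 's pmf \<Rightarrow> bool" where
  "stationary_dist P pol nu \<longleftrightarrow> dist_step P pol nu = nu"

text \<open>E[nu^t]: conditional law (given F^{[k-1]}) of the state at round t of episode k,
  where mu0 is the conditional law of the state s^{tau} at the first round tau of the episode
  and the policy pi^{[k]} is used in every round of the episode.\<close>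
definition cond_state_dist :: "('s \<Rightarrow> 'a \<Rightarrow> 's pmf) \<Rightarrow> ('s \<Rightarrow> 'a pmf) \<Rightarrow> 's pmf \<Rightarrow> nat \<Rightarrow> nat \<Rightarrow> 's pmf" where
  "cond_state_dist P pol mu0 tau t = (dist_step P pol ^^ (t - tau)) mu0"

definition occupancy :: "'s pmf \<Rightarrow> ('s \<Rightarrow> 'a pmf) \<Rightarrow> 's \<Rightarrow> 'a \<Rightarrow> real" where
  "occupancy nu pol s a = pmf nu s * pmf (pol s) a"

end

theory Submission
  imports Defs
begin

text \<open>Since every transition probability is at least \<open>\<alpha>\<close>, each row of \<open>P\<^sup>\<pi>\<close> is the
  uniform mass \<open>\<alpha>\<close> on every state plus a remainder of total mass \<open>1 - S \<alpha>\<close>. The uniform part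
  is the same for all rows and cancels in the difference of two distributions pushed through the
  chain, so one step contracts the \<open>\<ell>\<^sub>1\<close> distance by the factor \<open>1 - S \<alpha> \<le> exp (- S \<alpha>)\<close>.
  The stationary distribution is a fixed point, and the initial distance is at most 2, so after
  the mixing phase of \<open>ln k / (\<alpha> S)\<close> rounds the distance is at most \<open>2 / k \<le> 2 / \<surd>k\<close>.
  Finally, \<open>\<rho>\<close> and \<open>\<nu>\<close> differ only by the factor \<open>\<pi>(a|s)\<close>, which sums to 1 over actions.\<close>

definition l1_dist :: "'s::finite pmf \<Rightarrow> 's pmf \<Rightarrow> real" where
  "l1_dist \<mu> \<nu> = (\<Sum>s\<in>UNIV. \<bar>pmf \<mu> s - pmf \<nu> s\<bar>)"

lemma sum_pmf_UNIV: "(\<Sum>s\<in>(UNIV::'s::finite set). pmf \<mu> s) = 1"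
  by (rule sum_pmf_eq_1) auto

lemma pmf_bind_finite:
  fixes \<mu> :: "'s::finite pmf"
  shows "pmf (bind_pmf \<mu> K) x = (\<Sum>s\<in>UNIV. pmf \<mu> s * pmf (K s) x)"
  unfolding pmf_bind by (subst integral_measure_pmf_real[where A=UNIV]) (auto simp: mult.commute)

lemma l1_dist_le_2: "l1_dist \<mu> \<nu> \<le> 2"
proof -
  have "l1_dist \<mu> \<nu> \<le> (\<Sum>s\<in>UNIV. pmf \<mu> s + pmf \<nu> s)"
    unfolding l1_dist_def by (rule sum_mono) (auto simp: abs_if)
  also have "\<dots> = 2"
    by (simp add: sum.distrib sum_pmf_UNIV)
  finally show ?thesis .
qed

lemma card_mult_le_1_if_pmf_ge:
  fixes p :: "'s::finite pmf"
  assumes "\<And>x. pmf p x \<ge> \<alpha>"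
  shows "real CARD('s) * \<alpha> \<le> 1"
proof -
  have "real CARD('s) * \<alpha> = (\<Sum>x\<in>(UNIV::'s set). \<alpha>)"
    by simp
  also have "\<dots> \<le> (\<Sum>x\<in>UNIV. pmf p x)"
    by (rule sum_mono) (rule assms)
  finally show ?thesis
    by (simp add: sum_pmf_UNIV)
qed

lemma pmf_policy_kernel_ge:
  fixes P :: "'s::finite \<Rightarrow> 'a::finite \<Rightarrow> 's pmf"
  assumes "\<And>s a s'. pmf (P s a) s' \<ge> \<alpha>"
  shows "pmf (policy_kernel P pol s) s' \<ge> \<alpha>"
proof -
  have "\<alpha> = (\<Sum>a\<in>UNIV. pmf (pol s) a * \<alpha>)"
    by (simp add: sum_distrib_right[symmetric] sum_pmf_UNIV)
  also have "\<dots> \<le> (\<Sum>a\<in>UNIV. pmf (pol s) a * pmf (P s a) s')"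
    by (intro sum_mono mult_left_mono assms) simp
  also have "\<dots> = pmf (policy_kernel P pol s) s'"
    unfolding policy_kernel_def by (rule pmf_bind_finite[symmetric])
  finally show ?thesis .
qed

lemma l1_dist_bind_le:
  fixes K :: "'s::finite \<Rightarrow> 's pmf"
  assumes K_ge: "\<And>s x. pmf (K s) x \<ge> \<alpha>"
  shows "l1_dist (bind_pmf \<mu> K) (bind_pmf \<nu> K) \<le> (1 - real CARD('s) * \<alpha>) * l1_dist \<mu> \<nu>"
proof -
  define d where "d s = pmf \<mu> s - pmf \<nu> s" for s
  have "(\<Sum>s\<in>UNIV. d s) = 0"
    by (simp add: d_def sum_subtractf sum_pmf_UNIV)
  \<comment> \<open>the differences \<open>d\<close> have total mass 0, which removes the common part \<open>\<alpha>\<close> of the rows\<close>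
  then have diff_eq: "pmf (bind_pmf \<mu> K) x - pmf (bind_pmf \<nu> K) x
      = (\<Sum>s\<in>UNIV. d s * (pmf (K s) x - \<alpha>))" for x
    by (simp add: pmf_bind_finite d_def sum_subtractf left_diff_distrib right_diff_distrib
        sum_distrib_right[symmetric])
  have "l1_dist (bind_pmf \<mu> K) (bind_pmf \<nu> K) \<le> (\<Sum>x\<in>UNIV. \<Sum>s\<in>UNIV. \<bar>d s\<bar> * (pmf (K s) x - \<alpha>))"
    unfolding l1_dist_def diff_eq
  proof (rule sum_mono)
    fix x
    have "\<bar>\<Sum>s\<in>UNIV. d s * (pmf (K s) x - \<alpha>)\<bar> \<le> (\<Sum>s\<in>UNIV. \<bar>d s * (pmf (K s) x - \<alpha>)\<bar>)"
      by (rule sum_abs)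
    also have "\<dots> = (\<Sum>s\<in>UNIV. \<bar>d s\<bar> * (pmf (K s) x - \<alpha>))"
      using K_ge by (intro sum.cong) (auto simp: abs_mult)
    finally show "\<bar>\<Sum>s\<in>UNIV. d s * (pmf (K s) x - \<alpha>)\<bar> \<le> (\<Sum>s\<in>UNIV. \<bar>d s\<bar> * (pmf (K s) x - \<alpha>))" .
  qed
  also have "\<dots> = (\<Sum>s\<in>UNIV. \<bar>d s\<bar> * (\<Sum>x\<in>UNIV. pmf (K s) x - \<alpha>))"
    by (subst sum.swap) (simp add: sum_distrib_left)
  also have "\<dots> = (1 - real CARD('s) * \<alpha>) * l1_dist \<mu> \<nu>"
    by (simp add: sum_subtractf sum_pmf_UNIV l1_dist_def d_def sum_distrib_left mult.commute)
  finally show ?thesis .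
qed

lemma l1_dist_funpow_dist_step_le:
  fixes P :: "'s::finite \<Rightarrow> 'a::finite \<Rightarrow> 's pmf"
  assumes P_ge: "\<And>s a s'. pmf (P s a) s' \<ge> \<alpha>"
    and stat: "stationary_dist P pol \<nu>"
  shows "l1_dist ((dist_step P pol ^^ n) \<mu>) \<nu> \<le> (1 - real CARD('s) * \<alpha>) ^ n * l1_dist \<mu> \<nu>"
proof (induction n)
  case 0
  then show ?case by simp
next
  case (Suc n)
  let ?c = "real CARD('s) * \<alpha>"
  have K_ge: "\<And>s s'. pmf (policy_kernel P pol s) s' \<ge> \<alpha>"
    using pmf_policy_kernel_ge P_ge by blast
  have "l1_dist ((dist_step P pol ^^ Suc n) \<mu>) \<nu>
      = l1_dist (dist_step P pol ((dist_step P pol ^^ n) \<mu>)) (dist_step P pol \<nu>)"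
    using stat by (simp add: stationary_dist_def)
  also have "\<dots> \<le> (1 - ?c) * l1_dist ((dist_step P pol ^^ n) \<mu>) \<nu>"
    unfolding dist_step_def by (rule l1_dist_bind_le[OF K_ge])
  also have "\<dots> \<le> (1 - ?c) * ((1 - ?c) ^ n * l1_dist \<mu> \<nu>)"
    using Suc card_mult_le_1_if_pmf_ge[OF K_ge] by (intro mult_left_mono) auto
  finally show ?case by simp
qed

lemma one_minus_power_le_inverse:
  fixes c :: real and k n :: nat
  assumes "0 \<le> c" "c \<le> 1" "k \<ge> 1" "ln (real k) \<le> c * real n"
  shows "(1 - c) ^ n \<le> 1 / real k"
proof -
  have "(1 - c) ^ n \<le> exp (- c) ^ n"
    using assms(2) exp_ge_add_one_self[of "- c"] by (intro power_mono) auto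
  also have "\<dots> = exp (- (c * real n))"
    by (simp add: exp_of_nat_mult[symmetric] mult.commute)
  also have "\<dots> \<le> exp (- ln (real k))"
    using assms(4) by simp
  also have "\<dots> = 1 / real k"
    using assms(3) by (simp add: exp_minus inverse_eq_divide)
  finally show ?thesis .
qed

lemma ln_le_mult_elapsed:
  fixes c :: real and k tau t :: nat
  assumes "c > 0" "k \<ge> 1" "real t \<ge> real tau + ln (real k) / c"
  shows "ln (real k) \<le> c * real (t - tau)"
proof -
  have "0 \<le> ln (real k) / c"
    using assms(1,2) by simp
  then have "tau \<le> t"
    using assms(3) by linarith
  then have "ln (real k) / c \<le> real (t - tau)"
    using assms(3) by (simp add: of_nat_diff)
  then show ?thesis
    using assms(1) by (simp add: divide_le_eq mult.commute)
qed

lemma inverse_le_inverse_sqrt: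
  assumes "k \<ge> 1"
  shows "1 / real k \<le> 1 / sqrt (real k)"
proof -
  have "1 \<le> sqrt (real k)"
    using assms by simp
  then have "sqrt (real k) * 1 \<le> sqrt (real k) * sqrt (real k)"
    by (rule mult_left_mono) simp
  then show ?thesis
    using assms by (simp add: frac_le)
qed

lemma sum_abs_occupancy_diff:
  fixes \<mu> \<nu> :: "'s::finite pmf" and pol :: "'s \<Rightarrow> 'a::finite pmf"
  shows "(\<Sum>a\<in>UNIV. \<bar>occupancy \<mu> pol s a - occupancy \<nu> pol s a\<bar>) = \<bar>pmf \<mu> s - pmf \<nu> s\<bar>"
proof -
  have "(\<Sum>a\<in>UNIV. \<bar>occupancy \<mu> pol s a - occupancy \<nu> pol s a\<bar>)
      = (\<Sum>a\<in>UNIV. \<bar>pmf \<mu> s - pmf \<nu> s\<bar> * pmf (pol s) a)"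
    by (intro sum.cong) (auto simp: occupancy_def abs_mult left_diff_distrib[symmetric])
  also have "\<dots> = \<bar>pmf \<mu> s - pmf \<nu> s\<bar>"
    by (simp add: sum_distrib_left[symmetric] sum_pmf_UNIV)
  finally show ?thesis .
qed

theorem lemma2:
  fixes P :: "'s::finite \<Rightarrow> 'a::finite \<Rightarrow> 's pmf"
    and pol :: "'s \<Rightarrow> 'a pmf"
    and alpha :: real
    and k tau t :: nat
    and mu0 nu :: "'s pmf"
  assumes alpha_pos: "alpha > 0"
    and P_lower: "\<forall>s a s'. pmf (P s a) s' \<ge> alpha"
    and k_ge: "k \<ge> 1"
    and stat: "stationary_dist P pol nu"
    and stationary_phase: "real t \<ge> real tau + ln (real k) / (alpha * real CARD('s))"
  shows "(\<Sum>s\<in>UNIV. \<Sum>a\<in>UNIV. \<bar>occupancy (cond_state_dist P pol mu0 tau t) pol s a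
                                   - occupancy nu pol s a\<bar>)
           = (\<Sum>s\<in>UNIV. \<bar>pmf (cond_state_dist P pol mu0 tau t) s - pmf nu s\<bar>)
       \<and> (\<Sum>s\<in>UNIV. \<bar>pmf (cond_state_dist P pol mu0 tau t) s - pmf nu s\<bar>) \<le> 2 / sqrt (real k)"
proof -
  define c where "c = real CARD('s) * alpha"
  define n where "n = t - tau"
  have P_ge: "\<And>s a s'. pmf (P s a) s' \<ge> alpha"
    using P_lower by blast
  have c_pos: "c > 0" and c_le_1: "c \<le> 1"
    using alpha_pos card_mult_le_1_if_pmf_ge[OF P_ge] by (auto simp: c_def)
  have "ln (real k) \<le> c * real n"
    using ln_le_mult_elapsed[OF c_pos k_ge] stationary_phase by (simp add: c_def n_def mult.commute)
  then have decay: "(1 - c) ^ n \<le> 1 / sqrt (real k)"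
    using one_minus_power_le_inverse[of c k n] inverse_le_inverse_sqrt[OF k_ge] c_pos c_le_1 k_ge
    by linarith
  have "l1_dist (cond_state_dist P pol mu0 tau t) nu \<le> (1 - c) ^ n * l1_dist mu0 nu"
    unfolding cond_state_dist_def c_def n_def by (rule l1_dist_funpow_dist_step_le[OF P_ge stat])
  also have "\<dots> \<le> (1 - c) ^ n * 2"
    using c_le_1 by (intro mult_left_mono l1_dist_le_2) simp
  also have "\<dots> \<le> 2 / sqrt (real k)"
    using decay by simp
  finally have "l1_dist (cond_state_dist P pol mu0 tau t) nu \<le> 2 / sqrt (real k)" .
  then show ?thesis
    by (simp add: sum_abs_occupancy_diff l1_dist_def)
qed

end
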